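(* For $\alpha,p\in(0,1]$, let $\mu_{\alpha,p}$ be the probability measure on $\mathbb{R}$ with Cauchy transform $$G_{\mu_{\alpha,p}}(z)=-\left(\frac{\big(1+(-\frac1z)^\alpha\big)^p-1}{p}\right)^{1/\alpha},\qquad z\in\mathbb{C}^+$$ (principal powers). Then $\mu_{\alpha,p}=\mathbf{M}_\alpha^+(\bm\beta_{1-p,1+p})$.
   Context: $G_\mu(z)=\int\frac{1}{z-x}\mu(dx)$, $F_\mu=1/G_\mu$. $\bm\beta_{p,q}$ is the beta distribution with density $\frac{1}{B(p,q)}x^{p-1}(1-x)^{q-1}$ on $(0,1)$ (for $p=1$, $\bm\beta_{0,2}$ is interpreted by weak continuity as $\delta_0$). $\mathbf{M}_\alpha^+:\mathcal{P}(\mathbb{R}_+)\to\mathcal{P}(\mathbb{R}_+)$ is characterized by $F_{\mathbf{M}_\alpha^+(\mu)}(z)=-\big(-F_\mu(-(-z)^\alpha)\big)^{1/\alpha}$ for $z<0$ (equivalently $\mathbf{M}_\alpha^+(\mu)=\mathbb{B}_{\bm\beta_{\alpha,1-\alpha}}(\mu)^{\boxtimes1/\alpha}\boxtimes\mathbf{m}_\alpha^+$, with $\mathbb{B}_\sigma(\mu)$ defined by $\sigma\boxtimes\mu=\sigma\circlearrowright\mathbb{B}_\sigma(\mu)$ and $\mathbf{m}_\alpha^+$ the positive monotone stable law). *)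

theory Defs
  imports "HOL-Probability.Probability"
begin

definition cauchy_transform :: "real measure \<Rightarrow> complex \<Rightarrow> complex" where
  "cauchy_transform \<mu> z = integral\<^sup>L \<mu> (\<lambda>x. 1 / (z - complex_of_real x))"

definition F_transform :: "real measure \<Rightarrow> complex \<Rightarrow> complex" where
  "F_transform \<mu> z = 1 / cauchy_transform \<mu> z"

definition prob_on_reals :: "real measure \<Rightarrow> bool" where
  "prob_on_reals \<mu> \<longleftrightarrow> prob_space \<mu> \<and> sets \<mu> = sets borel"

text \<open>Beta distribution beta_{a,b} with density x^(a-1)(1-x)^(b-1)/B(a,b) on (0,1);
  for a = 0 it is interpreted (by weak continuity, as in the paper for beta_{0,2}) as delta_0.\<close>
definition beta_dist :: "real \<Rightarrow> real \<Rightarrow> real measure" where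
  "beta_dist a b = (if a = 0 then return borel 0 else
     density lborel (\<lambda>x. ennreal (indicator {0<..<1} x *
        x powr (a - 1) * (1 - x) powr (b - 1) / Beta a b)))"

definition is_M_alpha_plus :: "real \<Rightarrow> real measure \<Rightarrow> real measure \<Rightarrow> bool" where
  "is_M_alpha_plus \<alpha> \<nu> \<rho> \<longleftrightarrow>
     prob_on_reals \<rho> \<and> \<rho> {0..} = 1 \<and>
     (\<forall>z::real. z < 0 \<longrightarrow>
        F_transform \<rho> (complex_of_real z) =
          - ((- F_transform \<nu> (complex_of_real (- ((- z) powr \<alpha>))))
               powr complex_of_real (1 / \<alpha>)))"

end

theory Submission
  imports Defs
begin

text \<open>On the upper half-plane \<open>G\<^sub>\<mu>\<close> is given by a formula \<open>h\<close> that extends continuously, with real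
  values, to the negative half-line. The Poisson-kernel bound
  \<open>\<mu>(B(c, e)) \<le> 2e |Im G\<^sub>\<mu>(c + ie)|\<close> together with uniform continuity of \<open>h\<close> on compact
  intervals shows that \<mu> puts no mass on \<open>(-\<infinity>, 0)\<close>; then \<open>G\<^sub>\<mu> = h\<close> on \<open>(-\<infinity>, 0)\<close> by dominated
  convergence. On the other side, the substitution \<open>t = x(1+s)/(x+s)\<close> in the Beta integral gives
  \<open>G(-s) = -((1 + 1/s)\<^sup>p - 1)/p\<close> for \<open>\<beta>\<^sub>1\<^sub>-\<^sub>p\<^sub>,\<^sub>1\<^sub>+\<^sub>p\<close>, and with \<open>s = (-z)\<^sup>\<alpha>\<close> the identity defining
  \<open>M\<^sub>\<alpha>\<^sup>+\<close> becomes an equality between explicit positive reals.\<close>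

section \<open>Beta integrals\<close>

lemma Beta_substitution_factor:
  fixes a b s x :: real
  assumes "0 < x" "x < 1" "0 < s"
  shows "(x*(1+s)/(x+s)) powr (a-1) * (s*(1-x)/(x+s)) powr (b-1) * (s*(1+s)/(x+s)^2)
     = (1+s) powr a * s powr b * (x powr (a-1) * (1-x) powr (b-1) / (x+s) powr (a+b))"
proof -
  have "(x+s)^2 = (x+s) powr 2" using assms by (simp add: powr_realpow)
  then have denominator: "(x+s) powr (a+b) = (x+s) powr (a-1) * (x+s) powr (b-1) * (x+s)^2"
    by (simp only: flip: powr_add) (simp add: algebra_simps)
  have factors: "(x*(1+s)/(x+s)) powr (a-1) = x powr (a-1) * (1+s) powr (a-1) / (x+s) powr (a-1)"
       "(s*(1-x)/(x+s)) powr (b-1) = s powr (b-1) * (1-x) powr (b-1) / (x+s) powr (b-1)"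
       "(1+s) powr a = (1+s) powr (a-1) * (1+s)" "s powr b = s powr (b-1) * s"
    using assms by (simp_all add: powr_mult powr_divide powr_diff)
  show ?thesis
    unfolding denominator factors using assms by (simp add: field_simps)
qed

lemma nn_integral_Beta:
  fixes a b :: real
  assumes "0 < a" "0 < b"
  shows "(\<integral>\<^sup>+x. ennreal (x powr (a-1) * (1-x) powr (b-1) * indicator {0..1} x) \<partial>lborel)
    = ennreal (Beta a b)"
proof -
  have "(\<integral>\<^sup>+x. ennreal (x powr (a-1) * (1-x) powr (b-1)) * indicator {0..1} x \<partial>lborel)
      = ennreal (Beta a b)"
    by (rule nn_integral_has_integral_lebesgue'[OF _ has_integral_Beta_real[OF assms]]) simp
  then show ?thesis
    by (simp add: indicator_mult_ennreal mult.commute)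
qed

lemma nn_integral_Beta_shifted:
  fixes a b s :: real
  assumes ab: "0 < a" "0 < b" and s: "0 < s"
  shows "(\<integral>\<^sup>+x. ennreal (x powr (a-1) * (1-x) powr (b-1) / (x+s) powr (a+b) * indicator {0..1} x) \<partial>lborel)
    = ennreal (Beta a b / ((1+s) powr a * s powr b))"
proof -
  define k where "k y = y powr (a-1) * (1-y) powr (b-1)" for y :: real
  define g where "g x = x*(1+s)/(x+s)" for x :: real
  define g' where "g' x = s*(1+s)/(x+s)^2" for x :: real
  define C where "C = (1+s) powr a * s powr b"
  define f where "f x = x powr (a-1) * (1-x) powr (b-1) / (x+s) powr (a+b) * indicator {0..1} x"
    for x :: real
  have C: "0 < C" using s by (simp add: C_def)
  have f_nonneg: "0 \<le> f x" for x by (simp add: f_def)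
  have "ennreal (Beta a b)
      = (\<integral>\<^sup>+y. ennreal (k y * indicator {g 0..g 1} y) \<partial>lborel)"
    using nn_integral_Beta[OF ab] s by (simp add: g_def k_def)
  also have "\<dots> = (\<integral>\<^sup>+x. ennreal (k (g x) * g' x * indicator {0..1} x) \<partial>lborel)"
  proof (rule nn_integral_substitution)
    show "set_borel_measurable borel {g 0..g 1} k"
      by (simp add: set_borel_measurable_def k_def)
    show "(g has_real_derivative g' x) (at x)" if "x \<in> {0..1}" for x
      using that s unfolding g_def g'_def
      by (auto intro!: derivative_eq_intros simp: field_simps power2_eq_square)
    show "continuous_on {0..1} g'"
      unfolding g'_def using s by (intro continuous_intros) auto
  qed (use s in \<open>auto simp: g'_def\<close>)
  also have "\<dots> = (\<integral>\<^sup>+x. ennreal C * f x \<partial>lborel)"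
  proof (intro nn_integral_cong)
    fix x :: real
    have "k (g x) * g' x * indicator {0..1} x = C * f x"
    proof (cases "0 < x \<and> x < 1")
      case True
      have "1 - g x = s*(1-x)/(x+s)" using True s by (simp add: g_def field_simps)
      then show ?thesis
        using Beta_substitution_factor[of x s a b] True s by (simp add: k_def g_def g'_def C_def f_def)
    next
      case False
      then consider "x = 0" | "x = 1" | "x \<notin> {0..1}" by force
      then show ?thesis using s by cases (auto simp: k_def g_def f_def)
    qed
    then show "ennreal (k (g x) * g' x * indicator {0..1} x) = ennreal C * f x"
      using C f_nonneg by (simp add: ennreal_mult)
  qed
  also have "\<dots> = ennreal C * (\<integral>\<^sup>+x. f x \<partial>lborel)"
    by (rule nn_integral_cmult) (simp add: f_def)
  finally have Beta_eq: "ennreal (Beta a b) = ennreal C * (\<integral>\<^sup>+x. f x \<partial>lborel)" .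
  have "(\<integral>\<^sup>+x. f x \<partial>lborel) = (ennreal (1/C) * ennreal C) * (\<integral>\<^sup>+x. f x \<partial>lborel)"
    using C by (simp flip: ennreal_mult)
  also have "\<dots> = ennreal (1/C) * ennreal (Beta a b)"
    by (simp only: Beta_eq mult.assoc)
  also have "\<dots> = ennreal (Beta a b / C)"
    using C ab by (simp add: Beta_def flip: ennreal_mult)
  finally show ?thesis
    by (simp add: f_def C_def)
qed

lemma has_bochner_integral_Beta_shifted:
  fixes a b s :: real
  assumes ab: "0 < a" "0 < b" and s: "0 < s"
  shows "has_bochner_integral lborel
    (\<lambda>x. x powr (a-1) * (1-x) powr (b-1) / (x+s) powr (a+b) * indicator {0..1} x)
    (Beta a b / ((1+s) powr a * s powr b))"
  using nn_integral_Beta_shifted[OF assms] ab s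
  by (intro has_bochner_integral_nn_integral) (auto simp: Beta_def)

lemma has_bochner_integral_Beta:
  fixes a b :: real
  assumes "0 < a" "0 < b"
  shows "has_bochner_integral lborel (\<lambda>x. x powr (a-1) * (1-x) powr (b-1) * indicator {0..1} x) (Beta a b)"
  using nn_integral_Beta[OF assms] assms
  by (intro has_bochner_integral_nn_integral) (auto simp: Beta_def)

text \<open>The kernel is split as \<open>(1-x)/(x+s) = (1+s)/(x+s) - 1\<close>, reducing it to the two Beta integrals.\<close>

lemma has_bochner_integral_Beta_Cauchy_kernel:
  fixes p s :: real
  assumes p: "0 < p" "p < 1" and s: "0 < s"
  shows "has_bochner_integral lborel (\<lambda>x. x powr (-p) * (1-x) powr p / (x+s) * indicator {0..1} x)
    (Beta (1-p) p * ((1 + 1/s) powr p - 1))"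
proof -
  define k where "k x = x powr (-p) * (1-x) powr (p-1) * indicator {0..1} x" for x :: real
  have "has_bochner_integral lborel (\<lambda>x. x powr (-p) * (1-x) powr (p-1) / (x+s) powr 1 * indicator {0..1} x)
      (Beta (1-p) p / ((1+s) powr (1-p) * s powr p))"
    using has_bochner_integral_Beta_shifted[of "1-p" p s] p s by simp
  then have "has_bochner_integral lborel (\<lambda>x. k x / (x+s))
      (Beta (1-p) p / ((1+s) powr (1-p) * s powr p))"
    by (rule has_bochner_integral_cong[THEN iffD1, rotated -1]) (use s in \<open>auto simp: k_def indicator_def\<close>)
  then have diff: "has_bochner_integral lborel (\<lambda>x. (1+s) * (k x / (x+s)) - k x)
      ((1+s) * (Beta (1-p) p / ((1+s) powr (1-p) * s powr p)) - Beta (1-p) p)"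
    using has_bochner_integral_Beta[of "1-p" p] p
    by (intro has_bochner_integral_diff has_bochner_integral_mult_right) (simp_all add: k_def)
  have integrand: "(\<lambda>x. (1+s) * (k x / (x+s)) - k x)
      = (\<lambda>x. x powr (-p) * (1-x) powr p / (x+s) * indicator {0..1} x)"
  proof
    fix x :: real
    show "(1+s) * (k x / (x+s)) - k x = x powr (-p) * (1-x) powr p / (x+s) * indicator {0..1} x"
    proof (cases "0 < x \<and> x < 1")
      case True
      have factor: "(1-x) powr p = (1-x) powr (p-1) * (1-x)" using True by (simp add: powr_diff)
      have "x + s \<noteq> 0" using True s by simp
      then show ?thesis using True unfolding k_def factor by (simp add: field_simps)
    next
      case False
      then consider "x = 0" | "x = 1" | "x \<notin> {0..1}" by force
      then show ?thesis using p by cases (auto simp: k_def)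
    qed
  qed
  have "(1+s) powr (1-p) = (1+s) / (1+s) powr p" "1 + 1/s = (1+s) / s"
    using s by (simp_all add: powr_diff field_simps)
  then have "(1+s) * (Beta (1-p) p / ((1+s) powr (1-p) * s powr p)) - Beta (1-p) p
      = Beta (1-p) p * ((1 + 1/s) powr p - 1)"
    using s by (simp add: powr_divide field_simps)
  then show ?thesis
    using diff unfolding integrand by simp
qed

lemma cauchy_transform_beta_dist:
  fixes p s :: real
  assumes p: "0 < p" "p \<le> 1" and s: "0 < s"
  shows "cauchy_transform (beta_dist (1-p) (1+p)) (complex_of_real (-s))
    = complex_of_real ((1 - (1 + 1/s) powr p) / p)"
proof (cases "p = 1")
  case True
  then show ?thesis
    using s by (simp add: cauchy_transform_def beta_dist_def integral_return field_simps)
next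
  case False
  with p have p1: "p < 1" by simp
  have Beta_succ: "Beta (1-p) (1+p) = p * Beta (1-p) p"
  proof -
    have "p \<notin> \<int>\<^sub>\<le>\<^sub>0" using p by (auto elim!: nonpos_Ints_cases)
    then show ?thesis using Beta_plus1_right[of p "1-p"] by (simp add: add.commute)
  qed
  have Beta_pos: "0 < Beta (1-p) p" using p p1 by (simp add: Beta_def)
  define d where "d x = indicator {0<..<1} x * x powr (-p) * (1-x) powr p / (p * Beta (1-p) p)"
    for x :: real
  have "beta_dist (1-p) (1+p) = density lborel (\<lambda>x. ennreal (d x))"
    using p1 by (simp add: beta_dist_def d_def Beta_succ)
  then have "cauchy_transform (beta_dist (1-p) (1+p)) (complex_of_real (-s))
      = (\<integral>x. d x *\<^sub>R (1 / (complex_of_real (-s) - complex_of_real x)) \<partial>lborel)"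
    unfolding cauchy_transform_def using p Beta_pos
    by (simp add: integral_density d_def)
  also have "\<dots> = (\<integral>x. complex_of_real (d x / (-s - x)) \<partial>lborel)"
    by (simp add: scaleR_conv_of_real)
  also have "\<dots> = (\<integral>x. complex_of_real (- (x powr (-p) * (1-x) powr p / (x+s) * indicator {0..1} x)
      / (p * Beta (1-p) p)) \<partial>lborel)"
  proof -
    have "d x / (-s - x) = - (x powr (-p) * (1-x) powr p / (x+s) * indicator {0..1} x) / (p * Beta (1-p) p)"
      for x
    proof (cases "0 < x \<and> x < 1")
      case True
      have "d x / (-s - x) = - (d x / (x+s))"
        by (simp flip: divide_minus_right)
      then show ?thesis using True s by (simp add: d_def)
    next
      case False
      then consider "x = 0" | "x = 1" | "x \<notin> {0..1}" by force
      then show ?thesis using p by cases (auto simp: d_def)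
    qed
    then show ?thesis by (simp only:)
  qed
  also have "\<dots> = complex_of_real (- (Beta (1-p) p * ((1 + 1/s) powr p - 1)) / (p * Beta (1-p) p))"
    using has_bochner_integral_integral_eq[OF has_bochner_integral_Beta_Cauchy_kernel[OF p(1) p1 s]]
    by (simp only: integral_complex_of_real integral_divide_zero integral_minus)
  finally show ?thesis
    using Beta_pos by (simp add: minus_divide_left)
qed

section \<open>Cauchy transforms with real boundary values on the negative half-line\<close>

lemma integrable_cauchy_kernel:
  fixes \<mu> :: "real measure"
  assumes "prob_on_reals \<mu>" "Im z \<noteq> 0"
  shows "integrable \<mu> (\<lambda>t. 1 / (z - complex_of_real t))"
proof -
  interpret prob_space \<mu> using assms by (simp add: prob_on_reals_def)
  have "norm (1 / (z - complex_of_real t)) \<le> 1 / \<bar>Im z\<bar>" for t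
    using abs_Im_le_cmod[of "z - complex_of_real t"] assms by (simp add: norm_divide frac_le)
  then show ?thesis
    using assms by (intro integrable_const_bound[where B="1 / \<bar>Im z\<bar>"])
      (auto simp: prob_on_reals_def cong: measurable_cong_sets)
qed

lemma Im_cauchy_transform:
  fixes \<mu> :: "real measure"
  assumes "prob_on_reals \<mu>" "e \<noteq> 0"
  shows "Im (cauchy_transform \<mu> (Complex x e)) = - (\<integral>t. e / ((x-t)^2 + e^2) \<partial>\<mu>)"
proof -
  have "Complex x e - complex_of_real t = Complex (x - t) e" for t
    by (simp add: complex_eq_iff)
  then have "Im (1 / (Complex x e - complex_of_real t)) = - (e / ((x-t)^2 + e^2))" for t
    by (simp add: Im_divide power2_eq_square)
  moreover have "Im (cauchy_transform \<mu> (Complex x e))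
      = (\<integral>t. Im (1 / (Complex x e - complex_of_real t)) \<partial>\<mu>)"
    unfolding cauchy_transform_def using integrable_cauchy_kernel assms by simp
  ultimately show ?thesis by simp
qed

lemma measure_cball_le_Im_cauchy_transform:
  fixes \<mu> :: "real measure"
  assumes \<mu>: "prob_on_reals \<mu>" and e: "0 < e"
  shows "measure \<mu> (cball x e) \<le> 2 * e * \<bar>Im (cauchy_transform \<mu> (Complex x e))\<bar>"
proof -
  interpret prob_space \<mu> using \<mu> by (simp add: prob_on_reals_def)
  have sets: "sets \<mu> = sets borel" using \<mu> by (simp add: prob_on_reals_def)
  define P where "P t = e / ((x-t)^2 + e^2)" for t
  have P_nonneg: "0 \<le> P t" for t
    using e by (simp add: P_def)
  have P_bound: "P t \<le> 1/e" for t
  proof -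
    have "e / ((x-t)^2 + e^2) \<le> e / e^2"
      using e by (intro divide_left_mono) (auto intro!: mult_pos_pos add_nonneg_pos)
    then show ?thesis using e by (simp add: P_def power2_eq_square)
  qed
  have P_int: "integrable \<mu> P"
  proof (rule integrable_const_bound[where B="1/e"])
    show "AE t in \<mu>. norm (P t) \<le> 1/e" using P_bound P_nonneg by simp
    show "P \<in> borel_measurable \<mu>" using sets unfolding P_def by (simp cong: measurable_cong_sets)
  qed
  have "indicator (cball x e) t \<le> 2 * e * P t" for t
  proof (cases "t \<in> cball x e")
    case True
    then have "(x-t)^2 \<le> e^2"
      using e abs_le_square_iff[of "x-t" e] by (simp add: dist_real_def)
    moreover have "0 < (x-t)^2 + e^2" using e by (simp add: add_nonneg_pos)
    ultimately have "1 \<le> 2 * e * P t"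
      unfolding P_def by (simp add: le_divide_eq power2_eq_square)
    then show ?thesis using True by simp
  qed (use P_nonneg e in simp)
  moreover have "integrable \<mu> (indicator (cball x e) :: real \<Rightarrow> real)"
    using sets by (simp add: integrable_indicator_iff less_top[symmetric])
  ultimately have "(\<integral>t. indicator (cball x e) t \<partial>\<mu>) \<le> (\<integral>t. 2 * e * P t \<partial>\<mu>)"
    using P_int by (intro integral_mono) auto
  then have "measure \<mu> (cball x e) \<le> (\<integral>t. 2 * e * P t \<partial>\<mu>)"
    using sets by simp
  also have "\<dots> = 2 * e * (- Im (cauchy_transform \<mu> (Complex x e)))"
    using Im_cauchy_transform[OF \<mu>, of e x] e by (simp add: P_def del: times_divide_eq_right)
  also have "\<dots> \<le> 2 * e * \<bar>Im (cauchy_transform \<mu> (Complex x e))\<bar>"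
    using e by (intro mult_left_mono) auto
  finally show ?thesis .
qed

lemma measure_Icc_le_of_cball_bound:
  fixes M :: "real measure"
  assumes M: "finite_measure M" "sets M = sets borel" and e: "0 < e" and ab: "a \<le> b"
    and cball: "\<And>c. c \<in> {a..b} \<Longrightarrow> measure M (cball c e) \<le> \<eta> * e"
  shows "measure M {a..b} \<le> \<eta> * (b - a + 2*e)"
proof -
  interpret finite_measure M by (fact M(1))
  have "0 \<le> \<eta> * e"
    using order.trans[OF measure_nonneg cball[of a]] ab by simp
  then have \<eta>: "0 \<le> \<eta>"
    using e by (simp add: zero_le_mult_iff)
  define N where "N = nat \<lceil>(b-a)/e\<rceil>"
  define I where "I = {k \<in> {0..N}. a + e * real k \<le> b}"
  have "{a..b} \<subseteq> (\<Union>k\<in>I. cball (a + e * real k) e)"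
  proof
    fix y assume y: "y \<in> {a..b}"
    define k where "k = nat \<lfloor>(y-a)/e\<rfloor>"
    have "real k = \<lfloor>(y-a)/e\<rfloor>" using y e by (simp add: k_def)
    then have "real k \<le> (y-a)/e" "(y-a)/e < real k + 1" by linarith+
    then have lo: "a + e * real k \<le> y" and hi: "y < a + e * real k + e"
      using e by (simp_all add: field_simps)
    have "(y-a)/e \<le> (b-a)/e" using y e by (intro divide_right_mono) auto
    then have "\<lfloor>(y-a)/e\<rfloor> \<le> \<lceil>(b-a)/e\<rceil>"
      using floor_le_ceiling order.trans floor_mono by blast
    then have "k \<le> N" unfolding k_def N_def by (rule nat_mono)
    then have "k \<in> I" using lo y by (simp add: I_def)
    moreover have "y \<in> cball (a + e * real k) e" using lo hi by (simp add: dist_real_def)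
    ultimately show "y \<in> (\<Union>k\<in>I. cball (a + e * real k) e)" by blast
  qed
  moreover have "finite I" by (simp add: I_def)
  then have "(\<Union>k\<in>I. cball (a + e * real k) e) \<in> sets M"
    unfolding M(2) by (intro sets.finite_UN) simp_all
  ultimately have "measure M {a..b} \<le> measure M (\<Union>k\<in>I. cball (a + e * real k) e)"
    by (rule finite_measure_mono)
  also have "\<dots> \<le> (\<Sum>k\<in>I. measure M (cball (a + e * real k) e))"
    using \<open>finite I\<close> by (intro finite_measure_subadditive_finite) (auto simp: M(2))
  also have "\<dots> \<le> (\<Sum>k\<in>I. \<eta> * e)"
    using e by (intro sum_mono cball) (auto simp: I_def)
  also have "\<dots> \<le> real (N + 1) * (\<eta> * e)"
  proof -
    have "card I \<le> card {0..N}" by (intro card_mono) (auto simp: I_def)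
    then show ?thesis using e \<eta> by (simp add: mult_right_mono)
  qed
  also have "\<dots> \<le> ((b-a)/e + 2) * (\<eta> * e)"
  proof -
    have "real N = \<lceil>(b-a)/e\<rceil>" using ab e by (simp add: N_def)
    then have "real (N + 1) \<le> (b-a)/e + 2" by linarith
    then show ?thesis using e \<eta> by (intro mult_right_mono) simp_all
  qed
  also have "\<dots> = \<eta> * (b - a + 2*e)"
    using e by (simp add: field_simps)
  finally show ?thesis .
qed

lemma uniformly_isCont_near_compact:
  fixes f :: "'a::metric_space \<Rightarrow> 'b::metric_space"
  assumes K: "compact K" and f: "\<And>x. x \<in> K \<Longrightarrow> isCont f x" and e: "0 < e"
  obtains d where "0 < d" "\<And>x y. x \<in> K \<Longrightarrow> dist y x < d \<Longrightarrow> dist (f y) (f x) < e"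
proof -
  define \<G> where "\<G> = {ball c r | c r. c \<in> K \<and> 0 < r \<and> (\<forall>y\<in>ball c r. dist (f y) (f c) < e/2)}"
  have "K \<subseteq> \<Union>\<G>"
  proof
    fix x assume x: "x \<in> K"
    obtain r where r: "0 < r" "\<And>y. dist y x < r \<Longrightarrow> dist (f y) (f x) < e/2"
      using f[OF x] e unfolding continuous_at_eps_delta by (metis half_gt_zero)
    then have "\<forall>y\<in>ball x r. dist (f y) (f x) < e/2" by (simp add: dist_commute)
    then have "ball x r \<in> \<G>" using x r(1) unfolding \<G>_def by blast
    then show "x \<in> \<Union>\<G>" using r(1) by (metis UnionI centre_in_ball)
  qed
  moreover have "\<And>B. B \<in> \<G> \<Longrightarrow> open B" by (auto simp: \<G>_def)
  ultimately obtain d where d: "0 < d" "\<And>x. x \<in> K \<Longrightarrow> \<exists>B\<in>\<G>. ball x d \<subseteq> B"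
    using Heine_Borel_lemma[OF K] by blast
  show thesis
  proof (rule that[OF d(1)])
    fix x y assume x: "x \<in> K" and y: "dist y x < d"
    obtain c r where sub: "ball x d \<subseteq> ball c r" and c: "\<forall>y\<in>ball c r. dist (f y) (f c) < e/2"
      using d(2)[OF x] by (auto simp: \<G>_def)
    have "x \<in> ball x d" "y \<in> ball x d"
      using d(1) y by (simp_all add: dist_commute)
    then have "x \<in> ball c r" "y \<in> ball c r"
      using sub by blast+
    then have "dist (f y) (f c) < e/2" "dist (f x) (f c) < e/2"
      using c by blast+
    then show "dist (f y) (f x) < e" by (rule dist_triangle_half_l)
  qed
qed

text \<open>The Poisson-kernel bound makes the mass of small balls centred in \<open>[a, b]\<close> \<open>o(radius)\<close>,
  uniformly in the centre; summing over a cover of \<open>[a, b]\<close> by such balls gives zero.\<close>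

lemma cauchy_transform_real_extension_null_Icc:
  fixes \<mu> :: "real measure" and h :: "complex \<Rightarrow> complex"
  assumes \<mu>: "prob_on_reals \<mu>" and G: "\<And>z. 0 < Im z \<Longrightarrow> cauchy_transform \<mu> z = h z"
    and h_cont: "\<And>x. x \<in> {a..b} \<Longrightarrow> isCont h (complex_of_real x)"
    and h_real: "\<And>x. x \<in> {a..b} \<Longrightarrow> Im (h (complex_of_real x)) = 0"
  shows "measure \<mu> {a..b} = 0"
proof (cases "a \<le> b")
  case ab: True
  interpret prob_space \<mu> using \<mu> by (simp add: prob_on_reals_def)
  have "measure \<mu> {a..b} \<le> 0 + \<epsilon>" if \<epsilon>: "0 < \<epsilon>" for \<epsilon>
  proof -
    define \<eta> where "\<eta> = \<epsilon> / (2 * (b - a + 2))"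
    have \<eta>: "0 < \<eta>" using \<epsilon> ab by (simp add: \<eta>_def)
    have "compact (complex_of_real ` {a..b})"
      by (intro compact_continuous_image continuous_intros) simp
    then obtain d where d: "0 < d"
      and close: "\<And>x w. x \<in> complex_of_real ` {a..b} \<Longrightarrow> dist w x < d \<Longrightarrow> dist (h w) (h x) < \<eta>"
      using uniformly_isCont_near_compact[of _ h, OF _ _ \<eta>] h_cont by blast
    define e where "e = min (d/2) 1"
    have e: "0 < e" "e < d" "e \<le> 1" using d by (auto simp: e_def)
    have "measure \<mu> (cball c e) \<le> (2 * \<eta>) * e" if c: "c \<in> {a..b}" for c
    proof -
      have "Complex c e - complex_of_real c = Complex 0 e"
        by (simp add: complex_eq_iff)
      then have "dist (Complex c e) (complex_of_real c) = e"
        using e by (simp add: dist_norm complex_norm)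
      then have "dist (h (Complex c e)) (h (complex_of_real c)) < \<eta>"
        using close c e by auto
      moreover have "\<bar>Im (h (Complex c e))\<bar> \<le> dist (h (Complex c e)) (h (complex_of_real c))"
        using abs_Im_le_cmod[of "h (Complex c e) - h (complex_of_real c)"] h_real[OF c]
        by (simp add: dist_norm)
      ultimately have "\<bar>Im (cauchy_transform \<mu> (Complex c e))\<bar> \<le> \<eta>"
        using G[of "Complex c e"] e by simp
      then have "2 * e * \<bar>Im (cauchy_transform \<mu> (Complex c e))\<bar> \<le> 2 * e * \<eta>"
        using e by (intro mult_left_mono) auto
      then show ?thesis
        using measure_cball_le_Im_cauchy_transform[OF \<mu> e(1), of c] by (simp add: mult_ac)
    qed
    then have "measure \<mu> {a..b} \<le> (2 * \<eta>) * (b - a + 2*e)"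
      using \<mu> e ab by (intro measure_Icc_le_of_cball_bound) (auto simp: prob_on_reals_def)
    also have "\<dots> \<le> (2 * \<eta>) * (b - a + 2)"
      using e \<eta> by (intro mult_left_mono) auto
    also have "\<dots> = \<epsilon>"
      using ab by (simp add: \<eta>_def field_simps)
    finally show ?thesis by simp
  qed
  then have "measure \<mu> {a..b} \<le> 0"
    by (rule field_le_epsilon)
  then show ?thesis
    using measure_nonneg[of \<mu> "{a..b}"] by linarith
qed simp

lemma emeasure_lessThan_0_eq_0:
  fixes M :: "real measure"
  assumes M: "finite_measure M" "sets M = sets borel"
    and null: "\<And>a b. b < 0 \<Longrightarrow> measure M {a..b} = 0"
  shows "emeasure M {..<0} = 0"
proof -
  interpret finite_measure M by (fact M(1))
  let ?J = "\<lambda>n::nat. {- real (Suc n) .. - 1 / real (Suc n)}"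
  have "{..<0} \<subseteq> (\<Union>n. ?J n)"
  proof
    fix y :: real assume "y \<in> {..<0}"
    then have y: "y < 0" by simp
    obtain n :: nat where n: "max (-y) (-1/y) < real n"
      using reals_Archimedean2 by blast
    then have "1 \<le> -y * real (Suc n)"
      using y by (simp add: field_simps)
    then have "y \<in> ?J n"
      using n y by (simp add: field_simps)
    then show "y \<in> (\<Union>n. ?J n)" by blast
  qed
  moreover have "emeasure M (\<Union>n. ?J n) = 0"
    using null M(2) by (intro emeasure_UN_eq_0) (auto simp: emeasure_eq_measure)
  ultimately show ?thesis
    using emeasure_mono[of "{..<0}" "\<Union>n. ?J n" M] M(2) by (simp add: sets.countable_UN)
qed

lemma AE_nonneg_if_cauchy_transform_real_extension:
  fixes \<mu> :: "real measure" and h :: "complex \<Rightarrow> complex"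
  assumes \<mu>: "prob_on_reals \<mu>" and G: "\<And>z. 0 < Im z \<Longrightarrow> cauchy_transform \<mu> z = h z"
    and h_cont: "\<And>x. x < 0 \<Longrightarrow> isCont h (complex_of_real x)"
    and h_real: "\<And>x. x < 0 \<Longrightarrow> Im (h (complex_of_real x)) = 0"
  shows "AE t in \<mu>. 0 \<le> t"
proof -
  interpret prob_space \<mu> using \<mu> by (simp add: prob_on_reals_def)
  have sets: "sets \<mu> = sets borel" using \<mu> by (simp add: prob_on_reals_def)
  have "emeasure \<mu> {..<0} = 0"
    using sets h_cont h_real
    by (intro emeasure_lessThan_0_eq_0 cauchy_transform_real_extension_null_Icc[OF \<mu> G])
      (auto intro: finite_measure_axioms)
  then have "{..<0} \<in> null_sets \<mu>"
    using sets by (simp add: null_sets_def)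
  then show ?thesis
    by (rule AE_I') auto
qed

lemma tendsto_cauchy_transform_negative_real:
  fixes \<mu> :: "real measure"
  assumes \<mu>: "prob_on_reals \<mu>" and nonneg: "AE t in \<mu>. 0 \<le> t" and x: "x < 0"
    and w: "w \<longlonglongrightarrow> complex_of_real x" and Re_w: "\<And>n. Re (w n) \<le> x"
  shows "(\<lambda>n. cauchy_transform \<mu> (w n)) \<longlonglongrightarrow> cauchy_transform \<mu> (complex_of_real x)"
  unfolding cauchy_transform_def
proof (rule integral_dominated_convergence[where w="\<lambda>_. 1 / (-x)"])
  interpret prob_space \<mu> using \<mu> by (simp add: prob_on_reals_def)
  have sets: "sets \<mu> = sets borel" using \<mu> by (simp add: prob_on_reals_def)
  show "(\<lambda>t. 1 / (complex_of_real x - complex_of_real t)) \<in> borel_measurable \<mu>"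
    "\<And>n. (\<lambda>t. 1 / (w n - complex_of_real t)) \<in> borel_measurable \<mu>"
    using sets by (simp_all cong: measurable_cong_sets)
  show "integrable \<mu> (\<lambda>_. 1 / (-x))" by simp
  show "AE t in \<mu>. (\<lambda>n. 1 / (w n - complex_of_real t)) \<longlonglongrightarrow> 1 / (complex_of_real x - complex_of_real t)"
    using nonneg
  proof (rule AE_mp, intro AE_I2 impI)
    fix t :: real assume "0 \<le> t"
    then have "complex_of_real x - complex_of_real t \<noteq> 0" using x by (simp flip: of_real_diff)
    then show "(\<lambda>n. 1 / (w n - complex_of_real t)) \<longlonglongrightarrow> 1 / (complex_of_real x - complex_of_real t)"
      by (intro tendsto_intros w)
  qed
  show "AE t in \<mu>. norm (1 / (w n - complex_of_real t)) \<le> 1 / (-x)" for n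
    using nonneg
  proof (rule AE_mp, intro AE_I2 impI)
    fix t :: real assume "0 \<le> t"
    then have "-x \<le> \<bar>Re (w n - complex_of_real t)\<bar>" using Re_w[of n] x by simp
    also have "\<dots> \<le> norm (w n - complex_of_real t)" by (rule abs_Re_le_cmod)
    finally have le: "-x \<le> norm (w n - complex_of_real t)" .
    then have "0 < norm (w n - complex_of_real t) * (-x)"
      using x by (intro mult_pos_pos) auto
    then have "1 / norm (w n - complex_of_real t) \<le> 1 / (-x)"
      using le by (intro divide_left_mono) auto
    then show "norm (1 / (w n - complex_of_real t)) \<le> 1 / (-x)"
      by (simp add: norm_divide)
  qed
qed

lemma cauchy_transform_eq_real_extension:
  fixes \<mu> :: "real measure" and h :: "complex \<Rightarrow> complex"
  assumes \<mu>: "prob_on_reals \<mu>" and G: "\<And>z. 0 < Im z \<Longrightarrow> cauchy_transform \<mu> z = h z"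
    and h_cont: "\<And>x. x < 0 \<Longrightarrow> isCont h (complex_of_real x)"
    and h_real: "\<And>x. x < 0 \<Longrightarrow> Im (h (complex_of_real x)) = 0"
    and x: "x < 0"
  shows "cauchy_transform \<mu> (complex_of_real x) = h (complex_of_real x)"
proof -
  define w where "w = (\<lambda>n. Complex x (inverse (real (Suc n))))"
  have "(\<lambda>n. Complex x (inverse (real (Suc n)))) \<longlonglongrightarrow> Complex x 0"
    by (intro tendsto_Complex tendsto_const LIMSEQ_inverse_real_of_nat)
  then have w_lim: "w \<longlonglongrightarrow> complex_of_real x"
    by (simp add: w_def complex_of_real_def)
  have "(\<lambda>n. cauchy_transform \<mu> (w n)) \<longlonglongrightarrow> cauchy_transform \<mu> (complex_of_real x)"
    using AE_nonneg_if_cauchy_transform_real_extension[OF \<mu> G h_cont h_real] x w_lim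
    by (intro tendsto_cauchy_transform_negative_real[OF \<mu>]) (auto simp: w_def)
  moreover have "(\<lambda>n. cauchy_transform \<mu> (w n)) = (\<lambda>n. h (w n))"
    using G by (simp add: w_def)
  moreover have "(\<lambda>n. h (w n)) \<longlonglongrightarrow> h (complex_of_real x)"
    using isCont_tendsto_compose[OF h_cont[OF x] w_lim] .
  ultimately show ?thesis
    using LIMSEQ_unique by metis
qed

section \<open>The Cauchy transform of \<open>\<mu>\<^sub>\<alpha>\<^sub>,\<^sub>p\<close>\<close>

definition G_alpha_p :: "real \<Rightarrow> real \<Rightarrow> complex \<Rightarrow> complex" where
  "G_alpha_p \<alpha> p z = - ((((1 + (- 1 / z) powr complex_of_real \<alpha>) powr complex_of_real p - 1)
      / complex_of_real p) powr complex_of_real (1 / \<alpha>))"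

lemma powr_one_plus_minus_one_div_pos:
  fixes u p :: real
  assumes "0 < u" "0 < p"
  shows "0 < ((1 + u) powr p - 1) / p"
  using assms gr_one_powr[of "1 + u" p] by simp

lemma G_alpha_p_stages_of_real:
  fixes \<alpha> p x :: real
  assumes "x < 0"
  shows "1 + (- 1 / complex_of_real x) powr complex_of_real \<alpha> = complex_of_real (1 + (-1/x) powr \<alpha>)"
    and "((1 + (- 1 / complex_of_real x) powr complex_of_real \<alpha>) powr complex_of_real p - 1)
        / complex_of_real p = complex_of_real (((1 + (-1/x) powr \<alpha>) powr p - 1) / p)"
proof -
  have "(- 1 / complex_of_real x) powr complex_of_real \<alpha> = complex_of_real ((-1/x) powr \<alpha>)"
    using powr_of_real[of "-1/x" \<alpha>] assms by simp
  then show stage: "1 + (- 1 / complex_of_real x) powr complex_of_real \<alpha> = complex_of_real (1 + (-1/x) powr \<alpha>)"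
    by simp
  show "((1 + (- 1 / complex_of_real x) powr complex_of_real \<alpha>) powr complex_of_real p - 1)
      / complex_of_real p = complex_of_real (((1 + (-1/x) powr \<alpha>) powr p - 1) / p)"
    unfolding stage using powr_of_real[of "1 + (-1/x) powr \<alpha>" p] by simp
qed

lemma G_alpha_p_of_real:
  fixes \<alpha> p x :: real
  assumes "0 < p" "x < 0"
  shows "G_alpha_p \<alpha> p (complex_of_real x)
    = complex_of_real (- ((((1 + (-1/x) powr \<alpha>) powr p - 1) / p) powr (1/\<alpha>)))"
  unfolding G_alpha_p_def G_alpha_p_stages_of_real(2)[OF assms(2)]
  using powr_of_real[OF less_imp_le, OF powr_one_plus_minus_one_div_pos, of "(-1/x) powr \<alpha>" p "1/\<alpha>"] assms
  by simp

lemma isCont_G_alpha_p: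
  fixes \<alpha> p x :: real
  assumes "0 < p" "x < 0"
  shows "isCont (G_alpha_p \<alpha> p) (complex_of_real x)"
proof -
  have pos: "complex_of_real r \<notin> \<real>\<^sub>\<le>\<^sub>0" if "0 < r" for r
    using that by (auto simp: complex_nonpos_Reals_iff)
  have "- 1 / complex_of_real x \<notin> \<real>\<^sub>\<le>\<^sub>0"
    using pos[of "-1/x"] assms by simp
  moreover have "complex_of_real x \<noteq> 0" "complex_of_real p \<noteq> 0"
    using assms by simp_all
  moreover have "1 + (- 1 / complex_of_real x) powr complex_of_real \<alpha> \<notin> \<real>\<^sub>\<le>\<^sub>0"
    unfolding G_alpha_p_stages_of_real(1)[OF assms(2)]
    by (rule pos) (simp add: add_pos_nonneg)
  moreover have "((1 + (- 1 / complex_of_real x) powr complex_of_real \<alpha>) powr complex_of_real p - 1)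
      / complex_of_real p \<notin> \<real>\<^sub>\<le>\<^sub>0"
    unfolding G_alpha_p_stages_of_real(2)[OF assms(2)]
    using assms by (intro pos powr_one_plus_minus_one_div_pos) simp_all
  ultimately show ?thesis
    unfolding G_alpha_p_def by (intro continuous_intros) simp_all
qed

lemma M_alpha_plus_identity_if_cauchy_transform_eq:
  fixes \<alpha> p z :: real and \<mu> :: "real measure"
  assumes p: "0 < p" "p \<le> 1" and z: "z < 0"
    and G: "cauchy_transform \<mu> (complex_of_real z) = G_alpha_p \<alpha> p (complex_of_real z)"
  shows "F_transform \<mu> (complex_of_real z) = - ((- F_transform (beta_dist (1 - p) (1 + p))
      (complex_of_real (- ((- z) powr \<alpha>)))) powr complex_of_real (1 / \<alpha>))"
proof -
  define s where "s = (-z) powr \<alpha>"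
  define Q where "Q = ((1 + 1/s) powr p - 1) / p"
  have s: "0 < s" using z by (simp add: s_def)
  have inv_s: "1/s = (-1/z) powr \<alpha>"
    using z powr_divide[of 1 "-z" \<alpha>] by (simp add: s_def)
  have Q: "0 < Q"
    unfolding Q_def using s p by (intro powr_one_plus_minus_one_div_pos) simp_all
  have \<nu>: "- F_transform (beta_dist (1 - p) (1 + p)) (complex_of_real (- ((- z) powr \<alpha>)))
      = complex_of_real (1/Q)"
    using cauchy_transform_beta_dist[OF p s]
    by (simp add: F_transform_def Q_def s_def minus_divide_right)
  have "F_transform \<mu> (complex_of_real z) = - complex_of_real (1 / Q powr (1/\<alpha>))"
    using G G_alpha_p_of_real[OF p(1) z] by (simp add: F_transform_def Q_def inv_s)
  also have "complex_of_real (1 / Q powr (1/\<alpha>)) = complex_of_real (1/Q) powr complex_of_real (1/\<alpha>)"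
    using Q powr_of_real[of "1/Q" "1/\<alpha>"] by (simp add: powr_divide)
  finally show ?thesis
    unfolding \<nu> .
qed

theorem mainTheorem10:
  fixes \<alpha> p :: real and \<mu> :: "real measure"
  assumes "0 < \<alpha>" "\<alpha> \<le> 1" "0 < p" "p \<le> 1"
    and "prob_on_reals \<mu>"
    and "\<forall>z. 0 < Im z \<longrightarrow> cauchy_transform \<mu> z =
           - ((((1 + (- 1 / z) powr complex_of_real \<alpha>) powr complex_of_real p - 1)
                / complex_of_real p) powr complex_of_real (1 / \<alpha>))"
  shows "is_M_alpha_plus \<alpha> (beta_dist (1 - p) (1 + p)) \<mu>"
proof -
  have \<mu>: "prob_on_reals \<mu>" by fact
  then interpret prob_space \<mu> by (simp add: prob_on_reals_def)
  have G: "\<And>z. 0 < Im z \<Longrightarrow> cauchy_transform \<mu> z = G_alpha_p \<alpha> p z"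
    using assms(6) by (simp add: G_alpha_p_def)
  have h_cont: "\<And>x. x < 0 \<Longrightarrow> isCont (G_alpha_p \<alpha> p) (complex_of_real x)"
    using isCont_G_alpha_p assms(3) by blast
  have h_real: "\<And>x. x < 0 \<Longrightarrow> Im (G_alpha_p \<alpha> p (complex_of_real x)) = 0"
    using G_alpha_p_of_real assms(3) by simp
  have "\<mu> {0..} = 1"
    using AE_nonneg_if_cauchy_transform_real_extension[OF \<mu> G h_cont h_real] \<mu>
    by (intro emeasure_eq_1_AE) (auto simp: prob_on_reals_def)
  moreover have "\<And>z. z < 0 \<Longrightarrow> cauchy_transform \<mu> (complex_of_real z) = G_alpha_p \<alpha> p (complex_of_real z)"
    by (rule cauchy_transform_eq_real_extension[OF \<mu> G h_cont h_real])
  ultimately show ?thesis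
    using \<mu> assms(3,4) M_alpha_plus_identity_if_cauchy_transform_eq
    by (simp add: is_M_alpha_plus_def)
qed

end
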